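(* Let $n\ge 2$ and $d_1\ge d_2\ge\cdots\ge d_n\ge 2$ be integers, and let $H=\mathbb{C}^{d_1}\otimes\mathbb{C}^{d_2}\otimes\cdots\otimes\mathbb{C}^{d_n}$. If $d_1<\prod_{i=2}^n d_i$, then $H$ contains no stochastic maximum entangled state; that is, there is no $|\phi_0\rangle\in H$ such that $|\phi\rangle\le_{\mathrm{SLOCC}}|\phi_0\rangle$ for every $|\phi\rangle\in H$.
   Context: For states $|\phi\rangle,|\psi\rangle\in H$ (the $i$-th tensor factor being held by party $i$), write $|\psi\rangle\le_{\mathrm{SLOCC}}|\phi\rangle$ if $|\phi\rangle$ can be transformed into $|\psi\rangle$ with nonzero probability by local quantum operations and classical communication; equivalently, there exist linear operators $L_i$ on $\mathbb{C}^{d_i}$ ($i=1,\dots,n$) with $(L_1\otimes\cdots\otimes L_n)|\phi\rangle=|\psi\rangle$. A stochastic maximum entangled state is a state $|\phi_0\rangle$ with $|\phi\rangle\le_{\mathrm{SLOCC}}|\phi_0\rangle$ for all $|\phi\rangle\in H$. *)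

theory Defs
  imports Complex_Main
begin

text \<open>Parties are indexed 0,...,n-1; party i holds the factor C^(d i).
  A basis index of H = C^(d 0) (x) ... (x) C^(d (n-1)) is a function
  f :: nat => nat with f i < d i for i < n and f i = 0 for i >= n.
  A vector of H is a complex-valued function on these indices (zero elsewhere).\<close>

definition tidx :: "nat \<Rightarrow> (nat \<Rightarrow> nat) \<Rightarrow> (nat \<Rightarrow> nat) set" where
  "tidx n d = {f. (\<forall>i<n. f i < d i) \<and> (\<forall>i\<ge>n. f i = 0)}"

definition in_H :: "nat \<Rightarrow> (nat \<Rightarrow> nat) \<Rightarrow> ((nat \<Rightarrow> nat) \<Rightarrow> complex) \<Rightarrow> bool" where
  "in_H n d \<psi> \<longleftrightarrow> (\<forall>f. f \<notin> tidx n d \<longrightarrow> \<psi> f = 0)"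

text \<open>L i is the (d i x d i) matrix of party i: entry (r, c) is L i r c
  (entries outside the range are irrelevant). Application of L 0 (x) ... (x) L (n-1).\<close>

definition local_apply ::
  "nat \<Rightarrow> (nat \<Rightarrow> nat) \<Rightarrow> (nat \<Rightarrow> nat \<Rightarrow> nat \<Rightarrow> complex) \<Rightarrow> ((nat \<Rightarrow> nat) \<Rightarrow> complex)
   \<Rightarrow> ((nat \<Rightarrow> nat) \<Rightarrow> complex)" where
  "local_apply n d L \<phi> = (\<lambda>f. if f \<in> tidx n d
      then (\<Sum>g\<in>tidx n d. (\<Prod>i<n. L i (f i) (g i)) * \<phi> g) else 0)"

definition slocc_le ::
  "nat \<Rightarrow> (nat \<Rightarrow> nat) \<Rightarrow> ((nat \<Rightarrow> nat) \<Rightarrow> complex) \<Rightarrow> ((nat \<Rightarrow> nat) \<Rightarrow> complex) \<Rightarrow> bool" where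
  "slocc_le n d \<psi> \<phi> \<longleftrightarrow> (\<exists>L. local_apply n d L \<phi> = \<psi>)"

definition stoch_max_entangled ::
  "nat \<Rightarrow> (nat \<Rightarrow> nat) \<Rightarrow> ((nat \<Rightarrow> nat) \<Rightarrow> complex) \<Rightarrow> bool" where
  "stoch_max_entangled n d \<phi>0 \<longleftrightarrow>
     in_H n d \<phi>0 \<and> (\<forall>\<phi>. in_H n d \<phi> \<longrightarrow> slocc_le n d \<phi> \<phi>0)"

end

theory Submission
  imports Defs "Jordan_Normal_Form.Determinant"
begin

(* Split H = C^(d 0) (x) K, where K is the tensor product of the remaining
   parties, of dimension N = d 1 * ... * d (n-1) > d 0 =: D.  A state is then a family of
   D slices w 0, ..., w (D-1) in K (definition slices).
   1. If phi0 is a stochastic maximum entangled (SME) state, then so is a canonical state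
      canon = sum_j |j> (x) |beta j>, for D distinct basis vectors beta j of K that together
      use every local basis value of every party (lemma canon_stoch_max_entangled): phi0
      reaches canon, and because every local slice of canon is a unit vector, all local
      operators used are invertible, so canon reaches phi0 back.
   2. Every state reachable from canon has all its slices in the span of the D product
      vectors obtained by applying the local operators to the beta j (canon_universal).
   3. With four basis vectors ix00, ix11, ix10, ix01 of K forming a "rectangle" in the
      parties 1 and 2 (so n >= 3, which follows from D < N and d 0 >= d 1), we build a
      state contradicting 2: if N >= D + 2 the probe slices span a space whose product
      vectors all miss ix00 (large_case); if N = D + 1 a nonzero product functional
      vanishing on all the product vectors leads to a contradiction (tight_case). *)

text \<open>Square matrices are functions \<open>nat \<Rightarrow> nat \<Rightarrow> complex\<close> restricted to \<open>{..<m}\<close>.\<close>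

lemma inverse_of_trivial_left_kernel:
  fixes M :: "nat \<Rightarrow> nat \<Rightarrow> complex" and m :: nat
  assumes lk: "\<And>v. (\<forall>c<m. (\<Sum>r<m. v r * M r c) = 0) \<Longrightarrow> (\<forall>r<m. v r = 0)"
  shows "\<exists>N. (\<forall>r<m. \<forall>c<m. (\<Sum>k<m. N r k * M k c) = (if r = c then 1 else 0)) \<and>
             (\<forall>r<m. \<forall>c<m. (\<Sum>k<m. M r k * N k c) = (if r = c then 1 else 0))"
proof -
  define A where "A = mat m m (\<lambda>(r,c). M r c)"
  have A: "A \<in> carrier_mat m m" unfolding A_def by auto
  have At: "transpose_mat A \<in> carrier_mat m m" using A by auto
  have "det A \<noteq> 0"
  proof
    assume "det A = 0"
    hence "det (transpose_mat A) = 0" using det_transpose[OF A] by simp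
    then obtain v where v: "v \<in> carrier_vec m" "v \<noteq> 0\<^sub>v m" "transpose_mat A *\<^sub>v v = 0\<^sub>v m"
      using det_0_iff_vec_prod_zero[OF At] by auto
    have "\<forall>c<m. (\<Sum>r<m. (v $ r) * M r c) = 0"
    proof (intro allI impI)
      fix c assume c: "c < m"
      have "(transpose_mat A *\<^sub>v v) $ c = 0" using v(3) c by simp
      hence "(\<Sum>r<m. M r c * v $ r) = 0" using c v(1) A
        by (simp add: mult_mat_vec_def scalar_prod_def A_def lessThan_atLeast0)
      thus "(\<Sum>r<m. (v $ r) * M r c) = 0" by (simp add: mult.commute)
    qed
    hence "\<forall>r<m. v $ r = 0" using lk by blast
    hence "v = 0\<^sub>v m" using v(1) by (intro eq_vecI) auto
    with v(2) show False by simp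
  qed
  from det_non_zero_imp_unit[OF A this, unfolded Units_def ring_mat_def, of "()"]
  obtain B where B: "B \<in> carrier_mat m m" "B * A = 1\<^sub>m m" "A * B = 1\<^sub>m m" by auto
  show ?thesis
  proof (intro exI[of _ "\<lambda>r c. B $$ (r,c)"] conjI allI impI)
    fix r c assume rc: "r < m" "c < m"
    have "(B * A) $$ (r,c) = (if r = c then 1 else 0)" using B(2) rc by simp
    thus "(\<Sum>k<m. B $$ (r,k) * M k c) = (if r = c then 1 else 0)" using rc A B(1)
      by (simp add: scalar_prod_def A_def lessThan_atLeast0 row_def col_def)
    have "(A * B) $$ (r,c) = (if r = c then 1 else 0)" using B(3) rc by simp
    thus "(\<Sum>k<m. M r k * B $$ (k,c)) = (if r = c then 1 else 0)" using rc A B(1)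
      by (simp add: scalar_prod_def A_def lessThan_atLeast0 row_def col_def)
  qed
qed

lemma kernel_trivial_of_left_inverse:
  fixes m :: nat
  assumes N: "\<forall>r<m. \<forall>c<m. (\<Sum>k<m. N r k * M k c) = (if r = c then 1 else (0::complex))"
    and v: "\<And>k. k < m \<Longrightarrow> (\<Sum>j<m. M k j * v j) = 0" and r: "r < m"
  shows "v r = 0"
proof -
  have "(\<Sum>c<m. (if r = c then 1 else 0) * v c) = (\<Sum>c<m. if r = c then v c else 0)"
    by (intro sum.cong) auto
  also have "\<dots> = v r" using r by (subst sum.delta') auto
  finally have "v r = (\<Sum>c<m. (if r = c then 1 else 0) * v c)" by simp
  also have "\<dots> = (\<Sum>c<m. (\<Sum>k<m. N r k * M k c) * v c)"
    using N r by (intro sum.cong refl) auto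
  also have "\<dots> = (\<Sum>c<m. \<Sum>k<m. N r k * (M k c * v c))"
    by (simp add: sum_distrib_right mult.assoc)
  also have "\<dots> = (\<Sum>k<m. N r k * (\<Sum>c<m. M k c * v c))"
    by (subst sum.swap) (simp add: sum_distrib_left)
  also have "\<dots> = 0" using v by simp
  finally show ?thesis .
qed

lemma left_kernel_or_dual_vector:
  fixes M :: "nat \<Rightarrow> nat \<Rightarrow> complex"
  assumes s: "s < m"
  shows "\<exists>v. (\<exists>y<m. v y \<noteq> 0) \<and> ((\<forall>c<m. (\<Sum>r<m. v r * M r c) = 0) \<or>
          (\<forall>c<m. (\<Sum>r<m. v r * M r c) = (if c = s then 1 else 0)))"
proof (cases "\<exists>v. (\<forall>c<m. (\<Sum>r<m. v r * M r c) = 0) \<and> \<not> (\<forall>r<m. v r = 0)")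
  case True thus ?thesis by blast
next
  case False
  then obtain N where N: "\<forall>r<m. \<forall>c<m. (\<Sum>k<m. N r k * M k c) = (if r = c then 1 else 0)"
    using inverse_of_trivial_left_kernel[of m M] by blast
  show ?thesis
  proof (intro exI[of _ "N s"] conjI disjI2 allI impI)
    show "\<exists>y<m. N s y \<noteq> 0"
    proof (rule ccontr)
      assume "\<not> (\<exists>y<m. N s y \<noteq> 0)"
      hence "(\<Sum>k<m. N s k * M k s) = 0" by simp
      thus False using N s by auto
    qed
    fix c assume "c < m" thus "(\<Sum>r<m. N s r * M r c) = (if c = s then 1 else 0)" using N s by auto
  qed
qed

lemma subset_card_between:
  assumes "finite B" "A \<subseteq> B" "card A \<le> k" "k \<le> card B"
  shows "\<exists>S. A \<subseteq> S \<and> S \<subseteq> B \<and> card S = k"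
proof -
  have fA: "finite A" using assms finite_subset by blast
  have "card (B - A) = card B - card A" using assms fA by (simp add: card_Diff_subset)
  hence "k - card A \<le> card (B - A)" using assms by simp
  then obtain T where T: "T \<subseteq> B - A" "card T = k - card A"
    using obtain_subset_with_card_n by metis
  have fT: "finite T" using T(1) assms(1) finite_subset by blast
  have "card (A \<union> T) = card A + card T" using T fA fT by (subst card_Un_disjoint) auto
  thus ?thesis using T assms by (intro exI[of _ "A \<union> T"]) auto
qed

lemma bij_from_shifted_interval:
  assumes "finite S" "card S = D - 1" "0 < D"
  shows "\<exists>\<gamma>. bij_betw \<gamma> {1..<D} S"
proof -
  obtain h where h: "bij_betw h {0..<card S} S" using ex_bij_betw_nat_finite[OF assms(1)] by blast
  have s: "bij_betw (\<lambda>k. k - 1) {1..<D} {0..<card S}"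
    unfolding assms(2) bij_betw_def
  proof
    show "inj_on (\<lambda>k. k - 1) {1..<D}" by (rule inj_onI) auto
    show "(\<lambda>k. k - 1) ` {1..<D} = {0..<D - 1}"
    proof (intro equalityI subsetI)
      fix x assume "x \<in> {0..<D - 1}"
      thus "x \<in> (\<lambda>k. k - 1) ` {1..<D}" by (intro image_eqI[of _ _ "x + 1"]) auto
    qed auto
  qed
  show ?thesis using bij_betw_trans[OF s h] by (auto simp: comp_def)
qed

lemma tidx_0: "tidx 0 d = {\<lambda>_. 0}"
  unfolding tidx_def by auto

lemma tidx_Suc: "tidx (Suc n) d = (\<lambda>(g,k). g(n:=k)) ` (tidx n d \<times> {..<d n})"
proof (intro equalityI subsetI)
  fix f assume f: "f \<in> tidx (Suc n) d"
  have "f(n:=0) \<in> tidx n d" "f n < d n" using f unfolding tidx_def by auto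
  moreover have "f = (f(n:=0))(n := f n)" by simp
  ultimately show "f \<in> (\<lambda>(g,k). g(n:=k)) ` (tidx n d \<times> {..<d n})"
    by (intro image_eqI[of _ _ "(f(n:=0), f n)"]) auto
next
  fix f assume "f \<in> (\<lambda>(g,k). g(n:=k)) ` (tidx n d \<times> {..<d n})"
  then obtain g k where "g \<in> tidx n d" "k < d n" "f = g(n:=k)" by auto
  thus "f \<in> tidx (Suc n) d" unfolding tidx_def by auto
qed

lemma tidx_Suc_inj: "inj_on (\<lambda>(g,k). g(n:=k)) (tidx n d \<times> {..<d n})"
proof (rule inj_onI, clarify)
  fix g k g' k' assume a: "g \<in> tidx n d" "g' \<in> tidx n d" "g(n:=k) = g'(n:=k')"
  have "k = k'" using fun_upd_eqD[OF a(3)] by (metis fun_upd_same)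
  moreover have "g = g'"
  proof
    fix i show "g i = g' i"
    proof (cases "i = n")
      case True thus ?thesis using a(1,2) unfolding tidx_def by auto
    next
      case False thus ?thesis using fun_cong[OF a(3), of i] by auto
    qed
  qed
  ultimately show "g = g' \<and> k = k'" by simp
qed

lemma finite_tidx: "finite (tidx n d)"
  by (induction n) (auto simp: tidx_0 tidx_Suc)

lemma tidx_eq:
  assumes "f \<in> tidx n d" "g \<in> tidx n d" "\<forall>i<n. f i = g i" shows "f = g"
proof
  fix i show "f i = g i" using assms by (cases "i < n") (auto simp: tidx_def)
qed

lemma sum_tidx_prod:
  "(\<Sum>g\<in>tidx n d. \<Prod>i<n. a i (g i)) = (\<Prod>i<n. \<Sum>k<d i. (a i k :: complex))"
proof (induction n)
  case 0 thus ?case by (simp add: tidx_0)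
next
  case (Suc n)
  have "(\<Sum>g\<in>tidx (Suc n) d. \<Prod>i<Suc n. a i (g i))
      = (\<Sum>(g,k)\<in>tidx n d \<times> {..<d n}. \<Prod>i<Suc n. a i ((g(n:=k)) i))"
    unfolding tidx_Suc by (subst sum.reindex[OF tidx_Suc_inj]) (simp add: case_prod_beta)
  also have "\<dots> = (\<Sum>(g,k)\<in>tidx n d \<times> {..<d n}. (\<Prod>i<n. a i (g i)) * a n k)"
    by (intro sum.cong refl) (auto simp: lessThan_Suc intro!: prod.cong)
  also have "\<dots> = (\<Sum>g\<in>tidx n d. \<Prod>i<n. a i (g i)) * (\<Sum>k<d n. a n k)"
    by (simp add: sum_product sum.cartesian_product)
  finally show ?case using Suc by (simp add: lessThan_Suc mult.commute)
qed

lemma local_apply_eval: "f \<in> tidx n d \<Longrightarrow>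
  local_apply n d L \<phi> f = (\<Sum>g\<in>tidx n d. (\<Prod>i<n. L i (f i) (g i)) * \<phi> g)"
  unfolding local_apply_def by simp

lemma local_apply_outside: "f \<notin> tidx n d \<Longrightarrow> local_apply n d L \<phi> f = 0"
  unfolding local_apply_def by simp

lemma local_apply_comp: "local_apply n d M (local_apply n d L \<phi>) =
   local_apply n d (\<lambda>i r c. \<Sum>k<d i. M i r k * L i k c) \<phi>"
proof (rule ext)
  fix f show "local_apply n d M (local_apply n d L \<phi>) f =
   local_apply n d (\<lambda>i r c. \<Sum>k<d i. M i r k * L i k c) \<phi> f"
  proof (cases "f \<in> tidx n d")
    case False thus ?thesis by (simp add: local_apply_outside)
  next
    case True
    have "local_apply n d M (local_apply n d L \<phi>) f
       = (\<Sum>g\<in>tidx n d. \<Sum>h\<in>tidx n d. (\<Prod>i<n. M i (f i) (g i) * L i (g i) (h i)) * \<phi> h)"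
      unfolding local_apply_eval[OF True]
      by (intro sum.cong refl) (simp add: local_apply_eval sum_distrib_left prod.distrib mult.assoc)
    also have "\<dots> = (\<Sum>h\<in>tidx n d. (\<Sum>g\<in>tidx n d. (\<Prod>i<n. M i (f i) (g i) * L i (g i) (h i))) * \<phi> h)"
      by (subst sum.swap) (simp only: sum_distrib_right)
    also have "\<dots> = (\<Sum>h\<in>tidx n d. (\<Prod>i<n. \<Sum>k<d i. M i (f i) k * L i k (h i)) * \<phi> h)"
      using sum_tidx_prod[where n=n and d=d and a="\<lambda>i k. M i (f i) k * L i k (h i)" for h]
      by simp
    also have "\<dots> = local_apply n d (\<lambda>i r c. \<Sum>k<d i. M i r k * L i k c) \<phi> f"
      unfolding local_apply_eval[OF True] ..
    finally show ?thesis .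
  qed
qed

lemma local_apply_id:
  assumes "in_H n d \<phi>"
  shows "local_apply n d (\<lambda>i r c. if r = c then 1 else 0) \<phi> = \<phi>"
proof (rule ext)
  fix f show "local_apply n d (\<lambda>i r c. if r = c then 1 else 0) \<phi> f = \<phi> f"
  proof (cases "f \<in> tidx n d")
    case False thus ?thesis using assms by (simp add: local_apply_outside in_H_def)
  next
    case True
    have "local_apply n d (\<lambda>i r c. if r = c then 1 else 0) \<phi> f
       = (\<Sum>g\<in>tidx n d. (if g = f then \<phi> g else 0))"
      unfolding local_apply_eval[OF True]
    proof (intro sum.cong refl)
      fix g assume g: "g \<in> tidx n d"
      show "(\<Prod>i<n. if f i = g i then 1 else 0) * \<phi> g = (if g = f then \<phi> g else 0)"
      proof (cases "\<forall>i<n. f i = g i")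
        case True
        thus ?thesis using tidx_eq[OF \<open>f \<in> tidx n d\<close> g] by simp
      next
        case False
        then obtain i where "i < n" "f i \<noteq> g i" by auto
        hence "(\<Prod>i<n. if f i = g i then 1 else (0::complex)) = 0"
          by (intro prod_zero) auto
        moreover have "g \<noteq> f" using \<open>f i \<noteq> g i\<close> by auto
        ultimately show ?thesis by simp
      qed
    qed
    also have "\<dots> = \<phi> f" using True by (simp add: finite_tidx)
    finally show ?thesis .
  qed
qed

lemma local_apply_cong:
  assumes "\<And>i r c. i < n \<Longrightarrow> r < d i \<Longrightarrow> c < d i \<Longrightarrow> L i r c = L' i r c"
  shows "local_apply n d L \<phi> = local_apply n d L' \<phi>"
  unfolding local_apply_def
  by (intro ext if_cong refl sum.cong arg_cong2[where f="(*)"] prod.cong) (auto simp: tidx_def assms)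

lemma local_apply_left_kernel:
  assumes i: "i < n" and u: "\<And>c. c < d i \<Longrightarrow> (\<Sum>r<d i. u r * L i r c) = 0"
    and f: "f \<in> tidx n d"
  shows "(\<Sum>x<d i. u x * local_apply n d L \<phi> (f(i:=x))) = 0"
proof -
  have fx: "f(i:=x) \<in> tidx n d" if "x < d i" for x using f that i unfolding tidx_def by auto
  have split: "(\<Prod>l<n. L l ((f(i:=x)) l) (h l)) = L i x (h i) * (\<Prod>l\<in>{..<n}-{i}. L l (f l) (h l))"
    for x h
  proof -
    have "(\<Prod>l<n. L l ((f(i:=x)) l) (h l)) = L i x (h i) * (\<Prod>l\<in>{..<n}-{i}. L l ((f(i:=x)) l) (h l))"
      using i by (subst prod.remove[of _ i]) auto
    also have "(\<Prod>l\<in>{..<n}-{i}. L l ((f(i:=x)) l) (h l)) = (\<Prod>l\<in>{..<n}-{i}. L l (f l) (h l))"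
      by (intro prod.cong) auto
    finally show ?thesis .
  qed
  have "(\<Sum>x<d i. u x * local_apply n d L \<phi> (f(i:=x)))
      = (\<Sum>x<d i. \<Sum>h\<in>tidx n d. u x * (L i x (h i) * (\<Prod>l\<in>{..<n}-{i}. L l (f l) (h l)) * \<phi> h))"
    by (intro sum.cong refl)
      (simp_all only: local_apply_eval[OF fx] split sum_distrib_left lessThan_iff)
  also have "\<dots> = (\<Sum>h\<in>tidx n d. (\<Sum>x<d i. u x * L i x (h i)) * ((\<Prod>l\<in>{..<n}-{i}. L l (f l) (h l)) * \<phi> h))"
    by (subst sum.swap) (simp add: sum_distrib_right mult.assoc)
  also have "\<dots> = 0"
    by (intro sum.neutral ballI) (simp add: u tidx_def i)
  finally show ?thesis .
qed

text \<open>Indices of the parties 1, ..., n-1 (party 0 frozen to 0): the basis of the second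
  factor K in H = C^(d 0) (x) K.\<close>

definition rest_idx :: "nat \<Rightarrow> (nat \<Rightarrow> nat) \<Rightarrow> (nat \<Rightarrow> nat) set" where
  "rest_idx n d = {x \<in> tidx n d. x 0 = 0}"

lemma rest_idx_eq: "0 < n \<Longrightarrow> 0 < d 0 \<Longrightarrow> rest_idx n d = tidx n (d(0:=1))"
  unfolding rest_idx_def tidx_def by auto

lemma finite_rest_idx: "finite (rest_idx n d)"
  unfolding rest_idx_def using finite_tidx by auto

lemma prod_split_first:
  fixes n :: nat assumes "0 < n" shows "(\<Prod>i<n. F i) = F 0 * (\<Prod>i\<in>{1..<n}. F i)"
proof -
  have "{..<n} = insert 0 {1..<n}" using assms by auto
  thus ?thesis by (simp add: prod.insert)
qed

lemma sum_rest_idx_prod: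
  assumes "0 < n" "0 < d 0"
  shows "(\<Sum>x\<in>rest_idx n d. \<Prod>i\<in>{1..<n}. a i (x i)) = (\<Prod>i\<in>{1..<n}. \<Sum>k<d i. (a i k :: complex))"
proof -
  define a' where "a' = (\<lambda>i. if i = 0 then (\<lambda>_. 1) else a i)"
  have "(\<Sum>x\<in>rest_idx n d. \<Prod>i\<in>{1..<n}. a i (x i)) = (\<Sum>x\<in>tidx n (d(0:=1)). \<Prod>i<n. a' i (x i))"
    unfolding rest_idx_eq[where n=n and d=d, OF assms] prod_split_first[OF assms(1)]
    by (intro sum.cong refl) (auto simp: a'_def intro!: prod.cong)
  also have "\<dots> = (\<Prod>i<n. \<Sum>k<(d(0:=1)) i. a' i k)" by (rule sum_tidx_prod)
  also have "\<dots> = (\<Prod>i\<in>{1..<n}. \<Sum>k<d i. a i k)"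
    unfolding prod_split_first[OF assms(1)] by (auto simp: a'_def intro!: prod.cong)
  finally show ?thesis .
qed

lemma card_rest_idx:
  assumes "0 < n" "0 < d 0" shows "card (rest_idx n d) = (\<Prod>i\<in>{1..<n}. d i)"
proof -
  have "of_nat (card (rest_idx n d)) = (\<Sum>x\<in>rest_idx n d. \<Prod>i\<in>{1..<n}. (\<lambda>i k. 1::complex) i (x i))"
    by simp
  also have "\<dots> = of_nat (\<Prod>i\<in>{1..<n}. d i)" by (subst sum_rest_idx_prod[where n=n and d=d, OF assms]) simp
  finally show ?thesis by (simp only: of_nat_eq_iff)
qed

text \<open>The state of H whose k-th slice (first party in state k) is the vector w k of K.\<close>

definition slices :: "nat \<Rightarrow> (nat \<Rightarrow> nat) \<Rightarrow> (nat \<Rightarrow> (nat \<Rightarrow> nat) \<Rightarrow> complex) \<Rightarrow> ((nat \<Rightarrow> nat) \<Rightarrow> complex)" where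
  "slices n d w = (\<lambda>g. if g \<in> tidx n d then w (g 0) (g(0:=0)) else 0)"

lemma slices_in_H: "in_H n d (slices n d w)"
  unfolding in_H_def slices_def by simp

lemma slices_at:
  assumes "x \<in> rest_idx n d" "k < d 0" "0 < n" shows "slices n d w (x(0:=k)) = w k x"
proof -
  have "x(0:=k) \<in> tidx n d" using assms unfolding rest_idx_def tidx_def by auto
  moreover have "(x(0:=k))(0:=0) = x" using assms unfolding rest_idx_def by auto
  ultimately show ?thesis unfolding slices_def by simp
qed

text \<open>The canonical state \<open>\<Sum>\<^sub>j |j\<rangle> \<otimes> |\<beta> j\<rangle>\<close> attached to a family \<beta> of basis indices of K.\<close>

definition canon :: "nat \<Rightarrow> (nat \<Rightarrow> nat) \<Rightarrow> (nat \<Rightarrow> nat \<Rightarrow> nat) \<Rightarrow> ((nat \<Rightarrow> nat) \<Rightarrow> complex)" where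
  "canon n d \<beta> = slices n d (\<lambda>k x. if x = \<beta> k then 1 else 0)"

lemma canon_eval:
  "g \<in> tidx n d \<Longrightarrow> canon n d \<beta> g = (if g(0:=0) = \<beta> (g 0) then 1 else 0)"
  unfolding canon_def slices_def by simp

lemma local_apply_canon:
  assumes n: "0 < n" and bR: "\<And>j. j < d 0 \<Longrightarrow> \<beta> j \<in> rest_idx n d" and f: "f \<in> tidx n d"
  shows "local_apply n d C (canon n d \<beta>) f
       = (\<Sum>j<d 0. C 0 (f 0) j * (\<Prod>i\<in>{1..<n}. C i (f i) (\<beta> j i)))"
proof -
  define G where "G = (\<lambda>j. (\<beta> j)(0:=j)) ` {..<d 0}"
  define F where "F = (\<lambda>g. \<Prod>i<n. C i (f i) (g i))"
  have canon_G: "canon n d \<beta> g = (if g \<in> G then 1 else 0)" if g: "g \<in> tidx n d" for g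
  proof -
    have g0: "g 0 < d 0" using g n unfolding tidx_def by auto
    have "g(0:=0) = \<beta> (g 0) \<longleftrightarrow> g \<in> G"
    proof
      assume "g(0:=0) = \<beta> (g 0)"
      hence "g = (\<beta> (g 0))(0 := g 0)" by (metis fun_upd_triv fun_upd_upd)
      thus "g \<in> G" unfolding G_def using g0 by auto
    next
      assume "g \<in> G"
      then obtain j where j: "j < d 0" "g = (\<beta> j)(0:=j)" unfolding G_def by auto
      have "\<beta> j 0 = 0" using bR[OF j(1)] unfolding rest_idx_def by auto
      thus "g(0:=0) = \<beta> (g 0)" using j by auto
    qed
    thus ?thesis using canon_eval[OF g] by simp
  qed
  have G_sub: "G \<subseteq> tidx n d"
    using bR n unfolding G_def rest_idx_def tidx_def by auto
  have inj: "inj_on (\<lambda>j. (\<beta> j)(0:=j)) {..<d 0}"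
    by (rule inj_onI) (metis fun_upd_same)
  have "local_apply n d C (canon n d \<beta>) f = (\<Sum>g\<in>tidx n d. (if g \<in> G then F g else 0))"
    unfolding local_apply_eval[OF f] F_def by (intro sum.cong refl) (simp add: canon_G)
  also have "\<dots> = (\<Sum>g\<in>G. F g)"
    using G_sub by (simp add: sum.inter_restrict[symmetric, OF finite_tidx] Int_absorb1)
  also have "\<dots> = (\<Sum>j<d 0. F ((\<beta> j)(0:=j)))"
    unfolding G_def by (rule sum.reindex[OF inj, unfolded comp_def])
  also have "\<dots> = (\<Sum>j<d 0. C 0 (f 0) j * (\<Prod>i\<in>{1..<n}. C i (f i) (\<beta> j i)))"
    unfolding F_def prod_split_first[OF n]
    by (intro sum.cong refl arg_cong2[where f="(*)"] prod.cong) auto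
  finally show ?thesis .
qed

definition covering_family :: "nat \<Rightarrow> (nat \<Rightarrow> nat) \<Rightarrow> (nat \<Rightarrow> nat \<Rightarrow> nat) \<Rightarrow> bool" where
  "covering_family n d \<beta> \<longleftrightarrow> (\<forall>j<d 0. \<beta> j \<in> rest_idx n d) \<and> inj_on \<beta> {..<d 0} \<and>
     (\<forall>i y. 1 \<le> i \<longrightarrow> i < n \<longrightarrow> y < d i \<longrightarrow> (\<exists>j<d 0. \<beta> j i = y))"

text \<open>For a covering family, every local slice of the canonical state through some index
  is a unit vector: at party 0 the value y picks \<open>\<beta> y\<close>, at party i the index of some
  \<open>\<beta> j\<close> with \<open>\<beta> j i = y\<close> works.\<close>

lemma canon_unit_slice:
  assumes n: "0 < n" and cov: "covering_family n d \<beta>" and i: "i < n" and y: "y < d i"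
  shows "\<exists>f\<in>tidx n d. \<forall>x<d i. canon n d \<beta> (f(i:=x)) = (if x = y then 1 else 0)"
proof (cases "i = 0")
  case True
  have bY: "\<beta> y \<in> rest_idx n d" and b0: "\<beta> y 0 = 0"
    using cov y True unfolding covering_family_def rest_idx_def by auto
  have "canon n d \<beta> (((\<beta> y)(0:=y))(i:=x)) = (if x = y then 1 else 0)" if x: "x < d i" for x
  proof -
    have t: "(\<beta> y)(0:=x) \<in> tidx n d" using bY x True n unfolding rest_idx_def tidx_def by auto
    have "\<beta> y = \<beta> x \<longleftrightarrow> x = y"
      using inj_onD[of \<beta> "{..<d 0}" x y] cov x y True unfolding covering_family_def by auto
    moreover have "((\<beta> y)(0:=x))(0:=0) = \<beta> y" using b0 by auto
    ultimately show ?thesis using canon_eval[OF t, where \<beta>=\<beta>] True by auto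
  qed
  moreover have "(\<beta> y)(0:=y) \<in> tidx n d" using bY y True n unfolding rest_idx_def tidx_def by auto
  ultimately show ?thesis by blast
next
  case False
  have "1 \<le> i" using False by simp
  then obtain j where j: "j < d 0" "\<beta> j i = y"
    using cov i y unfolding covering_family_def by blast
  have bj: "\<beta> j \<in> rest_idx n d" and b0: "\<beta> j 0 = 0"
    using cov j unfolding covering_family_def rest_idx_def by auto
  have "canon n d \<beta> (((\<beta> j)(0:=j))(i:=x)) = (if x = y then 1 else 0)" if x: "x < d i" for x
  proof -
    have t: "((\<beta> j)(0:=j))(i:=x) \<in> tidx n d"
      using bj x j i n unfolding rest_idx_def tidx_def by auto
    have "(((\<beta> j)(0:=j))(i:=x))(0:=0) = (\<beta> j)(i:=x)" using False b0 by (auto simp: fun_eq_iff)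
    moreover have "(\<beta> j)(i:=x) = \<beta> j \<longleftrightarrow> x = y" using j(2) by (auto simp: fun_upd_idem_iff)
    ultimately show ?thesis using canon_eval[OF t, where \<beta>=\<beta>] False by auto
  qed
  moreover have "(\<beta> j)(0:=j) \<in> tidx n d" using bj j n unfolding rest_idx_def tidx_def by auto
  ultimately show ?thesis by blast
qed

lemma left_kernel_vanishes_at_unit_slice:
  assumes i: "i < n" and f: "f \<in> tidx n d"
    and unit: "\<And>x. x < d i \<Longrightarrow> local_apply n d L \<phi> (f(i:=x)) = (if x = y then 1 else 0)"
    and y: "y < d i" and u: "\<forall>c<d i. (\<Sum>r<d i. u r * L i r c) = 0"
  shows "u y = 0"
proof -
  have "(\<Sum>x<d i. u x * local_apply n d L \<phi> (f(i:=x))) = 0"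
    by (rule local_apply_left_kernel[OF i _ f]) (use u in auto)
  also have "(\<Sum>x<d i. u x * local_apply n d L \<phi> (f(i:=x))) = (\<Sum>x<d i. if y = x then u x else 0)"
    by (intro sum.cong) (auto simp: unit)
  finally show ?thesis using y by simp
qed

text \<open>The operators A with \<open>A \<phi>0 = canon\<close> have trivial left kernels, hence are invertible,
  so canon reaches \<open>\<phi>0\<close> and, by composition, every state.\<close>

lemma canon_stoch_max_entangled:
  assumes n: "0 < n" and cov: "covering_family n d \<beta>" and sme: "stoch_max_entangled n d \<phi>0"
  shows "stoch_max_entangled n d (canon n d \<beta>)"
proof -
  have H0: "in_H n d \<phi>0" and reach: "\<And>\<psi>. in_H n d \<psi> \<Longrightarrow> \<exists>L. local_apply n d L \<phi>0 = \<psi>"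
    using sme unfolding stoch_max_entangled_def slocc_le_def by auto
  obtain A where A: "local_apply n d A \<phi>0 = canon n d \<beta>"
    using reach[OF slices_in_H] unfolding canon_def by blast
  have trivial_kernel: "\<forall>y<d i. u y = 0"
    if i: "i < n" and u: "\<forall>c<d i. (\<Sum>r<d i. u r * A i r c) = 0" for i u
  proof (intro allI impI)
    fix y assume y: "y < d i"
    obtain f where f: "f \<in> tidx n d" "\<forall>x<d i. canon n d \<beta> (f(i:=x)) = (if x = y then 1 else 0)"
      using canon_unit_slice[OF n cov i y] by blast
    have "\<And>x. x < d i \<Longrightarrow> local_apply n d A \<phi>0 (f(i:=x)) = (if x = y then 1 else 0)"
      using f(2) A by simp
    from left_kernel_vanishes_at_unit_slice[OF i f(1) this y u] show "u y = 0" .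
  qed
  have "\<forall>i. \<exists>N. i < n \<longrightarrow> (\<forall>r<d i. \<forall>c<d i. (\<Sum>k<d i. N r k * A i k c) = (if r = c then 1 else 0))"
  proof
    fix i show "\<exists>N. i < n \<longrightarrow> (\<forall>r<d i. \<forall>c<d i. (\<Sum>k<d i. N r k * A i k c) = (if r = c then 1 else 0))"
      using inverse_of_trivial_left_kernel[of "d i" "A i"] trivial_kernel[of i] by blast
  qed
  from choice[OF this] obtain Ainv where Ainv:
    "\<forall>i<n. \<forall>r<d i. \<forall>c<d i. (\<Sum>k<d i. Ainv i r k * A i k c) = (if r = c then 1 else 0)"
    by blast
  have canon_to_phi0: "local_apply n d Ainv (canon n d \<beta>) = \<phi>0"
  proof -
    have "local_apply n d Ainv (canon n d \<beta>) = local_apply n d (\<lambda>i r c. \<Sum>k<d i. Ainv i r k * A i k c) \<phi>0"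
      unfolding A[symmetric] by (rule local_apply_comp)
    also have "\<dots> = local_apply n d (\<lambda>i r c. if r = c then 1 else 0) \<phi>0"
      by (rule local_apply_cong) (use Ainv in auto)
    also have "\<dots> = \<phi>0" by (rule local_apply_id[OF H0])
    finally show ?thesis .
  qed
  have "slocc_le n d \<psi> (canon n d \<beta>)" if \<psi>: "in_H n d \<psi>" for \<psi>
  proof -
    obtain B where "local_apply n d B \<phi>0 = \<psi>" using reach[OF \<psi>] by blast
    hence "local_apply n d (\<lambda>i r c. \<Sum>k<d i. B i r k * Ainv i k c) (canon n d \<beta>) = \<psi>"
      unfolding local_apply_comp[symmetric] canon_to_phi0 .
    thus ?thesis unfolding slocc_le_def by blast
  qed
  thus ?thesis unfolding stoch_max_entangled_def canon_def using slices_in_H by blast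
qed

lemma canon_universal:
  fixes w :: "nat \<Rightarrow> (nat \<Rightarrow> nat) \<Rightarrow> complex"
  assumes n: "0 < n" and bR: "\<And>j. j < d 0 \<Longrightarrow> \<beta> j \<in> rest_idx n d"
    and sme: "stoch_max_entangled n d (canon n d \<beta>)"
  shows "\<exists>C. \<forall>k<d 0. \<forall>x\<in>rest_idx n d.
           w k x = (\<Sum>j<d 0. C 0 k j * (\<Prod>i\<in>{1..<n}. C i (x i) (\<beta> j i)))"
proof -
  obtain C where C: "local_apply n d C (canon n d \<beta>) = slices n d w"
    using sme slices_in_H unfolding stoch_max_entangled_def slocc_le_def by blast
  have "w k x = (\<Sum>j<d 0. C 0 k j * (\<Prod>i\<in>{1..<n}. C i (x i) (\<beta> j i)))"
    if k: "k < d 0" and x: "x \<in> rest_idx n d" for k x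
  proof -
    have xt: "x(0:=k) \<in> tidx n d" using x k n unfolding rest_idx_def tidx_def by auto
    have "w k x = local_apply n d C (canon n d \<beta>) (x(0:=k))"
      unfolding C using slices_at[OF x k n] by simp
    also have "\<dots> = (\<Sum>j<d 0. C 0 k j * (\<Prod>i\<in>{1..<n}. C i ((x(0:=k)) i) (\<beta> j i)))"
      using local_apply_canon[OF n bR xt] by simp
    also have "\<dots> = (\<Sum>j<d 0. C 0 k j * (\<Prod>i\<in>{1..<n}. C i (x i) (\<beta> j i)))"
      by (intro sum.cong refl arg_cong2[where f="(*)"] prod.cong) auto
    finally show ?thesis .
  qed
  thus ?thesis by blast
qed

text \<open>Four basis indices of K forming a rectangle in the parties 1 and 2 (all other
  parties in state 0): ix00, ix11 and ix10, ix01 are the two diagonals.\<close>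

definition ix00 :: "nat \<Rightarrow> nat" where "ix00 = (\<lambda>_. 0)"
definition ix11 :: "nat \<Rightarrow> nat" where "ix11 = (\<lambda>i. if i = 1 \<or> i = 2 then 1 else 0)"
definition ix10 :: "nat \<Rightarrow> nat" where "ix10 = (\<lambda>i. if i = 1 then 1 else 0)"
definition ix01 :: "nat \<Rightarrow> nat" where "ix01 = (\<lambda>i. if i = 2 then 1 else 0)"

lemma corners_distinct: "ix00 \<noteq> ix11" "ix00 \<noteq> ix01" "ix11 \<noteq> ix01"
proof -
  have "ix00 1 \<noteq> ix11 1" "ix00 2 \<noteq> ix01 2" "ix11 1 \<noteq> ix01 1"
    unfolding ix00_def ix11_def ix01_def by simp_all
  thus "ix00 \<noteq> ix11" "ix00 \<noteq> ix01" "ix11 \<noteq> ix01" by auto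
qed

lemma corners_in_rest_idx:
  assumes "3 \<le> n" "2 \<le> d 1" "2 \<le> d 2" "\<forall>i<n. 0 < d i"
  shows "ix00 \<in> rest_idx n d" "ix11 \<in> rest_idx n d" "ix01 \<in> rest_idx n d"
  using assms unfolding rest_idx_def tidx_def ix00_def ix11_def ix01_def by auto

lemma product_rectangle:
  "(\<Prod>i\<in>{1..<n}. F i (ix00 i)) * (\<Prod>i\<in>{1..<n}. F i (ix11 i))
   = (\<Prod>i\<in>{1..<n}. F i (ix10 i)) * (\<Prod>i\<in>{1..<n}. (F i (ix01 i) :: complex))"
proof -
  have "(\<Prod>i\<in>{1..<n}. F i (ix00 i)) * (\<Prod>i\<in>{1..<n}. F i (ix11 i))
      = (\<Prod>i\<in>{1..<n}. F i (ix00 i) * F i (ix11 i))"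
    by (simp add: prod.distrib)
  also have "\<dots> = (\<Prod>i\<in>{1..<n}. F i (ix10 i) * F i (ix01 i))"
    by (intro prod.cong refl) (auto simp: ix00_def ix11_def ix10_def ix01_def mult.commute)
  also have "\<dots> = (\<Prod>i\<in>{1..<n}. F i (ix10 i)) * (\<Prod>i\<in>{1..<n}. F i (ix01 i))"
    by (simp add: prod.distrib)
  finally show ?thesis .
qed

definition probe :: "(nat \<Rightarrow> nat \<Rightarrow> nat) \<Rightarrow> nat \<Rightarrow> (nat \<Rightarrow> nat) \<Rightarrow> complex" where
  "probe \<gamma> k x = (if k = 0 then (if x = ix00 then 1 else 0) - (if x = ix11 then 1 else 0)
                   else (if x = \<gamma> k then 1 else 0))"

lemma probe_slices_independent:
  assumes R00: "ix00 \<in> R"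
    and \<gamma>R: "\<And>k. 1 \<le> k \<Longrightarrow> k < D \<Longrightarrow> \<gamma> k \<in> R - {ix00, ix11}" and \<gamma>inj: "inj_on \<gamma> {1..<D}"
    and u: "\<And>x. x \<in> R \<Longrightarrow> (\<Sum>k<D. u k * probe \<gamma> k x) = 0" and r: "r < D"
  shows "u r = 0"
proof (cases "r = 0")
  case True
  have "(\<Sum>k<D. u k * probe \<gamma> k ix00) = (\<Sum>k<D. if 0 = k then u 0 else 0)"
  proof (intro sum.cong refl)
    fix k assume k: "k \<in> {..<D}"
    thus "u k * probe \<gamma> k ix00 = (if 0 = k then u 0 else 0)"
      using \<gamma>R[of k] corners_distinct by (auto simp: probe_def)
  qed
  thus ?thesis using u[OF R00] True r by simp
next
  case False
  have \<gamma>r: "\<gamma> r \<in> R" "\<gamma> r \<noteq> ix00" "\<gamma> r \<noteq> ix11" using \<gamma>R[of r] r False by auto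
  have "(\<Sum>k<D. u k * probe \<gamma> k (\<gamma> r)) = (\<Sum>k<D. if r = k then u r else 0)"
  proof (intro sum.cong refl)
    fix k assume k: "k \<in> {..<D}"
    have "k \<noteq> 0 \<Longrightarrow> \<gamma> r = \<gamma> k \<longleftrightarrow> r = k"
      using inj_onD[OF \<gamma>inj, of r k] k r False by auto
    thus "u k * probe \<gamma> k (\<gamma> r) = (if r = k then u r else 0)"
      using \<gamma>r False by (cases "k = 0") (auto simp: probe_def)
  qed
  thus ?thesis using u[OF \<gamma>r(1)] r by simp
qed

text \<open>Independence makes M invertible, so each q j is a combination of probe slices; hence
  \<open>q j ix01 = 0\<close> and \<open>q j ix00 = - q j ix11\<close>, and the rectangle relation forces \<open>q j ix00 = 0\<close>,
  contradicting the ix00-entry 1 of slice 0.\<close>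

lemma large_case_core:
  fixes M :: "nat \<Rightarrow> nat \<Rightarrow> complex" and q :: "nat \<Rightarrow> (nat \<Rightarrow> nat) \<Rightarrow> complex"
  assumes D: "0 < D" and corners: "ix00 \<in> R" "ix11 \<in> R" "ix01 \<in> R"
    and \<gamma>R: "\<And>k. 1 \<le> k \<Longrightarrow> k < D \<Longrightarrow> \<gamma> k \<in> R - {ix00, ix11, ix01}" and \<gamma>inj: "inj_on \<gamma> {1..<D}"
    and rect: "\<And>j. j < D \<Longrightarrow> q j ix00 * q j ix11 = q j ix10 * q j ix01"
    and F: "\<And>k x. k < D \<Longrightarrow> x \<in> R \<Longrightarrow> probe \<gamma> k x = (\<Sum>j<D. M k j * q j x)"
  shows False
proof -
  have \<gamma>R': "\<gamma> k \<in> R - {ix00, ix11}" if "1 \<le> k" "k < D" for k using \<gamma>R[OF that] by blast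
  have "\<forall>r<D. u r = 0" if u: "\<forall>c<D. (\<Sum>k<D. u k * M k c) = 0" for u
  proof (intro allI impI)
    fix r assume r: "r < D"
    have zero: "(\<Sum>k<D. u k * probe \<gamma> k x) = 0" if x: "x \<in> R" for x
    proof -
      have "(\<Sum>k<D. u k * probe \<gamma> k x) = (\<Sum>k<D. \<Sum>j<D. u k * (M k j * q j x))"
        using x by (intro sum.cong refl) (simp add: F sum_distrib_left)
      also have "\<dots> = (\<Sum>j<D. \<Sum>k<D. u k * (M k j * q j x))" by (rule sum.swap)
      also have "\<dots> = (\<Sum>j<D. (\<Sum>k<D. u k * M k j) * q j x)"
        by (simp add: sum_distrib_right mult.assoc)
      finally show ?thesis using u by simp
    qed
    show "u r = 0" by (rule probe_slices_independent[OF corners(1) \<gamma>R' \<gamma>inj zero r])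
  qed
  then obtain N where N: "\<forall>r<D. \<forall>c<D. (\<Sum>k<D. N r k * M k c) = (if r = c then 1 else 0)"
    using inverse_of_trivial_left_kernel[of D M] by blast
  have q01: "q j ix01 = 0" if j: "j < D" for j
  proof (rule kernel_trivial_of_left_inverse[OF N _ j])
    fix k assume k: "k < D"
    have "probe \<gamma> k ix01 = 0" using \<gamma>R[of k] k corners_distinct by (auto simp: probe_def)
    thus "(\<Sum>j<D. M k j * q j ix01) = 0" using F[OF k corners(3)] by simp
  qed
  have q00_q11: "q j ix00 + q j ix11 = 0" if j: "j < D" for j
  proof (rule kernel_trivial_of_left_inverse[OF N _ j, where v="\<lambda>j. q j ix00 + q j ix11"])
    fix k assume k: "k < D"
    have "probe \<gamma> k ix00 + probe \<gamma> k ix11 = 0"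
      using \<gamma>R[of k] k corners_distinct by (auto simp: probe_def)
    thus "(\<Sum>j<D. M k j * (q j ix00 + q j ix11)) = 0" using F[OF k corners(1)] F[OF k corners(2)]
      by (simp add: distrib_left sum.distrib)
  qed
  have q00: "q j ix00 = 0" if j: "j < D" for j
  proof -
    have "q j ix00 * q j ix11 = 0" using rect[OF j] q01[OF j] by simp
    moreover have "q j ix11 = - q j ix00" using q00_q11[OF j] by (simp add: eq_neg_iff_add_eq_0 add.commute)
    ultimately show ?thesis by simp
  qed
  have "probe \<gamma> 0 ix00 = 1" using corners_distinct by (simp add: probe_def)
  moreover have "probe \<gamma> 0 ix00 = 0" using F[OF D corners(1)] q00 by simp
  ultimately show False by simp
qed

lemma large_case:
  fixes R :: "(nat \<Rightarrow> nat) set"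
  assumes R: "finite R" "ix00 \<in> R" "ix11 \<in> R" "ix01 \<in> R" and D: "0 < D" "D + 2 \<le> card R"
    and universal: "\<And>w. \<exists>M q. (\<forall>j<D. q j ix00 * q j ix11 = q j ix10 * q j ix01) \<and>
                       (\<forall>k<D. \<forall>x\<in>R. w k x = (\<Sum>j<D. M k j * (q j x :: complex)))"
  shows False
proof -
  have "card (R - {ix00, ix11, ix01}) = card R - 3"
    using R corners_distinct by (simp add: card_Diff_subset)
  hence "D - 1 \<le> card (R - {ix00, ix11, ix01})" using D by simp
  then obtain S where S: "S \<subseteq> R - {ix00, ix11, ix01}" "card S = D - 1"
    using obtain_subset_with_card_n by metis
  have "finite S" using S(1) R(1) finite_subset by blast
  then obtain \<gamma> where \<gamma>: "bij_betw \<gamma> {1..<D} S"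
    using bij_from_shifted_interval[OF _ S(2) D(1)] by blast
  have \<gamma>R: "\<gamma> k \<in> R - {ix00, ix11, ix01}" if "1 \<le> k" "k < D" for k
    using bij_betwE[OF \<gamma>] S(1) that by auto
  obtain M q where "\<forall>j<D. q j ix00 * q j ix11 = q j ix10 * q j ix01"
      "\<forall>k<D. \<forall>x\<in>R. probe \<gamma> k x = (\<Sum>j<D. M k j * q j x)"
    using universal[of "probe \<gamma>"] by blast
  thus False
    by (intro large_case_core[OF D(1) R(2-4) \<gamma>R bij_betw_imp_inj_on[OF \<gamma>], of q M]) auto
qed

text \<open>For a basis index \<sigma> of K and any local matrices C, there is a nonzero product
  functional \<open>G = \<otimes>\<^sub>i G i\<close> on K annihilating every product vector \<open>\<otimes>\<^sub>i C i (-) (b i)\<close>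
  with \<open>b \<noteq> \<sigma>\<close>: at each party take a left kernel vector of \<open>C i\<close> if there is one, and
  otherwise the row of \<open>(C i)\<^sup>-\<^sup>1\<close> dual to \<open>\<sigma> i\<close>.\<close>

lemma annihilating_product_functional:
  fixes C :: "nat \<Rightarrow> nat \<Rightarrow> nat \<Rightarrow> complex"
  assumes n: "0 < n" and d0: "0 < d 0" and \<sigma>: "\<sigma> \<in> rest_idx n d"
  obtains G where "\<And>i. i \<in> {1..<n} \<Longrightarrow> \<exists>y<d i. G i y \<noteq> 0"
    and "\<And>b. b \<in> rest_idx n d \<Longrightarrow> b \<noteq> \<sigma> \<Longrightarrow>
           (\<Sum>x\<in>rest_idx n d. (\<Prod>i\<in>{1..<n}. G i (x i)) * (\<Prod>i\<in>{1..<n}. C i (x i) (b i))) = 0"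
proof -
  have "\<forall>i. \<exists>v. i \<in> {1..<n} \<longrightarrow> (\<exists>y<d i. v y \<noteq> 0) \<and> ((\<forall>c<d i. (\<Sum>r<d i. v r * C i r c) = 0) \<or>
          (\<forall>c<d i. (\<Sum>r<d i. v r * C i r c) = (if c = \<sigma> i then 1 else 0)))"
  proof
    fix i
    have "i \<in> {1..<n} \<Longrightarrow> \<sigma> i < d i" using \<sigma> unfolding rest_idx_def tidx_def by auto
    thus "\<exists>v. i \<in> {1..<n} \<longrightarrow> (\<exists>y<d i. v y \<noteq> 0) \<and> ((\<forall>c<d i. (\<Sum>r<d i. v r * C i r c) = 0) \<or>
          (\<forall>c<d i. (\<Sum>r<d i. v r * C i r c) = (if c = \<sigma> i then 1 else 0)))"
      using left_kernel_or_dual_vector[of "\<sigma> i" "d i" "C i"] by blast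
  qed
  from choice[OF this] obtain G where G: "\<And>i. i \<in> {1..<n} \<Longrightarrow> (\<exists>y<d i. G i y \<noteq> 0) \<and>
      ((\<forall>c<d i. (\<Sum>r<d i. G i r * C i r c) = 0) \<or>
       (\<forall>c<d i. (\<Sum>r<d i. G i r * C i r c) = (if c = \<sigma> i then 1 else 0)))"
    by blast
  show thesis
  proof (rule that)
    show "\<exists>y<d i. G i y \<noteq> 0" if "i \<in> {1..<n}" for i using G[OF that] by blast
  next
    fix b assume b: "b \<in> rest_idx n d" and b\<sigma>: "b \<noteq> \<sigma>"
    have "(\<Sum>x\<in>rest_idx n d. (\<Prod>i\<in>{1..<n}. G i (x i)) * (\<Prod>i\<in>{1..<n}. C i (x i) (b i)))
        = (\<Sum>x\<in>rest_idx n d. \<Prod>i\<in>{1..<n}. G i (x i) * C i (x i) (b i))"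
      by (simp add: prod.distrib)
    also have "\<dots> = (\<Prod>i\<in>{1..<n}. \<Sum>y<d i. G i y * C i y (b i))"
      by (rule sum_rest_idx_prod[where n=n and d=d, OF n d0])
    also have "\<dots> = 0"
    proof (rule ccontr)
      assume nz: "(\<Prod>i\<in>{1..<n}. \<Sum>y<d i. G i y * C i y (b i)) \<noteq> 0"
      have "b i = \<sigma> i" if i: "i < n" for i
      proof (cases "i = 0")
        case True thus ?thesis using b \<sigma> unfolding rest_idx_def by auto
      next
        case False
        hence i1: "i \<in> {1..<n}" using i by auto
        have factor: "(\<Sum>y<d i. G i y * C i y (b i)) \<noteq> 0" using nz i1 by auto
        have "b i < d i" using b i unfolding rest_idx_def tidx_def by auto
        hence "(\<Sum>y<d i. G i y * C i y (b i)) = (if b i = \<sigma> i then 1 else 0)"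
          using G[OF i1] factor by blast
        thus ?thesis using factor by (cases "b i = \<sigma> i") auto
      qed
      hence "b = \<sigma>" using tidx_eq b \<sigma> unfolding rest_idx_def by blast
      thus False using b\<sigma> by simp
    qed
    finally show "(\<Sum>x\<in>rest_idx n d. (\<Prod>i\<in>{1..<n}. G i (x i)) * (\<Prod>i\<in>{1..<n}. C i (x i) (b i))) = 0" .
  qed
qed

lemma product_functional_nonzero:
  assumes G: "\<And>i. i \<in> {1..<n} \<Longrightarrow> \<exists>y<d i. G i y \<noteq> 0" and d0: "0 < d 0"
  shows "\<exists>x\<in>rest_idx n d. (\<Prod>i\<in>{1..<n}. G i (x i)) \<noteq> (0::complex)"
proof -
  have "\<forall>i. \<exists>y. i \<in> {1..<n} \<longrightarrow> y < d i \<and> G i y \<noteq> 0" using G by blast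
  from choice[OF this] obtain Y where Y: "\<And>i. i \<in> {1..<n} \<Longrightarrow> Y i < d i \<and> G i (Y i) \<noteq> 0"
    by blast
  define x where "x = (\<lambda>i. if 1 \<le> i \<and> i < n then Y i else 0)"
  have "x \<in> rest_idx n d" unfolding x_def rest_idx_def tidx_def using Y d0 by (auto simp: Suc_le_eq)
  moreover have "(\<Prod>i\<in>{1..<n}. G i (x i)) \<noteq> 0" unfolding x_def using Y by (auto simp: prod_zero_iff)
  ultimately show ?thesis by blast
qed

text \<open>Take a probe whose
  slices \<open>e\<^sub>\<gamma>\<^sub>k\<close> run through all basis indices other than ix00, ix11.  The product functional
  P annihilating the vectors \<open>\<otimes>\<^sub>i C i (-) (\<beta> j i)\<close> annihilates all probe slices, so P
  vanishes off ix00, ix11 and \<open>P ix00 = P ix11\<close>; the rectangle relation then gives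
  \<open>P ix00 = 0\<close>, so \<open>P = 0\<close>, which is impossible.\<close>

lemma tight_case:
  assumes n: "0 < n" and d0: "0 < d 0" and card: "card (rest_idx n d) = d 0 + 1"
    and corners: "ix00 \<in> rest_idx n d" "ix11 \<in> rest_idx n d" "ix01 \<in> rest_idx n d"
    and bR: "\<And>j. j < d 0 \<Longrightarrow> \<beta> j \<in> rest_idx n d"
    and \<sigma>: "\<sigma> \<in> rest_idx n d" "\<sigma> \<notin> \<beta> ` {..<d 0}"
    and universal: "\<And>w. \<exists>C. \<forall>k<d 0. \<forall>x\<in>rest_idx n d.
                         (w k x :: complex) = (\<Sum>j<d 0. C 0 k j * (\<Prod>i\<in>{1..<n}. C i (x i) (\<beta> j i)))"
  shows False
proof -
  let ?R = "rest_idx n d"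
  have "card (?R - {ix00, ix11}) = d 0 - 1"
    using corners card corners_distinct finite_rest_idx by (simp add: card_Diff_subset)
  moreover have "finite (?R - {ix00, ix11})" by (simp add: finite_rest_idx)
  ultimately obtain \<gamma> where \<gamma>: "bij_betw \<gamma> {1..<d 0} (?R - {ix00, ix11})"
    using bij_from_shifted_interval[OF _ _ d0] by blast
  obtain C where C: "\<And>k x. k < d 0 \<Longrightarrow> x \<in> ?R \<Longrightarrow>
      probe \<gamma> k x = (\<Sum>j<d 0. C 0 k j * (\<Prod>i\<in>{1..<n}. C i (x i) (\<beta> j i)))"
    using universal[of "probe \<gamma>"] by blast
  obtain G where G_nz: "\<And>i. i \<in> {1..<n} \<Longrightarrow> \<exists>y<d i. G i y \<noteq> 0"
    and G_ann: "\<And>b. b \<in> ?R \<Longrightarrow> b \<noteq> \<sigma> \<Longrightarrow>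
      (\<Sum>x\<in>?R. (\<Prod>i\<in>{1..<n}. G i (x i)) * (\<Prod>i\<in>{1..<n}. C i (x i) (b i))) = 0"
    using annihilating_product_functional[OF n d0 \<sigma>(1), where C=C] by blast
  define P where "P = (\<lambda>x. \<Prod>i\<in>{1..<n}. G i (x i))"
  have P_probe: "(\<Sum>x\<in>?R. P x * probe \<gamma> k x) = 0" if k: "k < d 0" for k
  proof -
    have "(\<Sum>x\<in>?R. P x * probe \<gamma> k x)
        = (\<Sum>x\<in>?R. \<Sum>j<d 0. C 0 k j * (P x * (\<Prod>i\<in>{1..<n}. C i (x i) (\<beta> j i))))"
      using k by (intro sum.cong refl) (simp add: C sum_distrib_left mult.left_commute)
    also have "\<dots> = (\<Sum>j<d 0. C 0 k j * (\<Sum>x\<in>?R. P x * (\<Prod>i\<in>{1..<n}. C i (x i) (\<beta> j i))))"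
      by (subst sum.swap) (simp add: sum_distrib_left)
    also have "\<dots> = 0"
    proof (intro sum.neutral ballI)
      fix j assume "j \<in> {..<d 0}"
      hence "\<beta> j \<in> ?R" "\<beta> j \<noteq> \<sigma>" using bR \<sigma>(2) by auto
      thus "C 0 k j * (\<Sum>x\<in>?R. P x * (\<Prod>i\<in>{1..<n}. C i (x i) (\<beta> j i))) = 0"
        using G_ann unfolding P_def by simp
    qed
    finally show ?thesis .
  qed
  have P_off: "P x = 0" if x: "x \<in> ?R - {ix00, ix11}" for x
  proof -
    have "x \<in> \<gamma> ` {1..<d 0}" using x bij_betw_imp_surj_on[OF \<gamma>] by simp
    then obtain k where k: "k \<in> {1..<d 0}" "x = \<gamma> k" by blast
    have "(\<Sum>y\<in>?R. P y * probe \<gamma> k y) = (\<Sum>y\<in>?R. if x = y then P y else 0)"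
      using k by (intro sum.cong refl) (auto simp: probe_def)
    also have "\<dots> = P x" using x finite_rest_idx by simp
    finally show ?thesis using P_probe[of k] k by simp
  qed
  have "(\<Sum>y\<in>?R. P y * probe \<gamma> 0 y)
      = (\<Sum>y\<in>?R. (if ix00 = y then P y else 0) - (if ix11 = y then P y else 0))"
    by (intro sum.cong refl) (auto simp: probe_def)
  also have "\<dots> = P ix00 - P ix11" using corners finite_rest_idx by (simp add: sum_subtractf)
  finally have P_diag: "P ix00 = P ix11" using P_probe[OF d0] by simp
  have "P ix00 * P ix11 = P ix10 * P ix01" unfolding P_def by (rule product_rectangle)
  also have "P ix01 = 0" using P_off corners(3) corners_distinct by simp
  finally have "P ix00 = 0" using P_diag by simp
  hence "P x = 0" if "x \<in> ?R" for x
    using P_off P_diag that by (cases "x = ix00 \<or> x = ix11") auto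
  thus False using product_functional_nonzero[where n=n and d=d and G=G, OF G_nz d0] unfolding P_def by blast
qed

text \<open>Existence of a covering family when \<open>d 0 \<ge> d 1 \<ge> d i\<close> and \<open>d 0 < N\<close>: the diagonal
  indices \<open>(y, y, \<dots>)\<close> (capped by \<open>d i - 1\<close>), for y < d 1, already cover every local value;
  complete them to d 0 distinct indices.  Since \<open>d 0 < N\<close>, some index \<sigma> is left over.\<close>

lemma exists_covering_family:
  assumes n: "1 < n" and mono: "\<And>i j. i \<le> j \<Longrightarrow> j < n \<Longrightarrow> d j \<le> d i"
    and dpos: "\<forall>i<n. 0 < d i" and less: "d 0 < card (rest_idx n d)"
  obtains \<beta> \<sigma> where "covering_family n d \<beta>" "\<sigma> \<in> rest_idx n d" "\<sigma> \<notin> \<beta> ` {..<d 0}"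
proof -
  define diag where "diag = (\<lambda>y i. if 1 \<le> i \<and> i < n then min y (d i - 1) else (0::nat))"
  have diag_R: "diag y \<in> rest_idx n d" for y
    unfolding diag_def rest_idx_def tidx_def using dpos by (auto simp: min_def)
  have "inj_on diag {..<d 1}"
  proof (rule inj_onI)
    fix x y assume "x \<in> {..<d 1}" "y \<in> {..<d 1}" "diag x = diag y"
    hence "diag x 1 = diag y 1" "x < d 1" "y < d 1" by auto
    thus "x = y" unfolding diag_def using n by (auto simp: min_def split: if_splits)
  qed
  hence "card (diag ` {..<d 1}) \<le> d 0" using mono[of 0 1] n by (simp add: card_image)
  then obtain S where S: "diag ` {..<d 1} \<subseteq> S" "S \<subseteq> rest_idx n d" "card S = d 0"
    using subset_card_between[OF finite_rest_idx, of "diag ` {..<d 1}" n d "d 0"] diag_R less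
    by (auto simp: less_imp_le)
  have "finite S" using S(2) finite_rest_idx finite_subset by blast
  then obtain \<beta> where \<beta>: "bij_betw \<beta> {..<d 0} S"
    using ex_bij_betw_nat_finite[of S] S(3) by (auto simp: atLeast0LessThan)
  have cover: "\<exists>j<d 0. \<beta> j i = y" if i: "1 \<le> i" "i < n" and y: "y < d i" for i y
  proof -
    have "y < d 1" using mono[of 1 i] i y by simp
    hence "diag y \<in> \<beta> ` {..<d 0}" using S(1) bij_betw_imp_surj_on[OF \<beta>] by auto
    then obtain j where "j < d 0" "\<beta> j = diag y" by auto
    moreover have "diag y i = y" unfolding diag_def using i y by auto
    ultimately show ?thesis by metis
  qed
  have "covering_family n d \<beta>"
    unfolding covering_family_def using bij_betwE[OF \<beta>] S(2) bij_betw_imp_inj_on[OF \<beta>] cover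
    by blast
  moreover obtain \<sigma> where "\<sigma> \<in> rest_idx n d" "\<sigma> \<notin> S"
    using S(2,3) less by (metis less_irrefl subsetI subset_antisym)
  moreover have "\<beta> ` {..<d 0} = S" using bij_betw_imp_surj_on[OF \<beta>] .
  ultimately show thesis using that by blast
qed

theorem theorem1:
  fixes n :: nat and d :: "nat \<Rightarrow> nat"
  assumes "n \<ge> 2"
    and "\<And>i j. i \<le> j \<Longrightarrow> j < n \<Longrightarrow> d j \<le> d i"
    and "\<And>i. i < n \<Longrightarrow> d i \<ge> 2"
    and "d 0 < (\<Prod>i\<in>{1..<n}. d i)"
  shows "\<not> (\<exists>\<phi>0. stoch_max_entangled n d \<phi>0)"
proof
  assume "\<exists>\<phi>0. stoch_max_entangled n d \<phi>0"
  then obtain \<phi>0 where sme: "stoch_max_entangled n d \<phi>0" by blast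
  have n: "0 < n" using assms(1) by simp
  have dpos: "\<forall>i<n. 0 < d i" using assms(3) by (metis less_le_trans zero_less_numeral)
  hence d0: "0 < d 0" using n by simp
  have card: "d 0 < card (rest_idx n d)" using assms(4) card_rest_idx[where n=n and d=d, OF n d0] by simp
  have n3: "3 \<le> n"
  proof (rule ccontr)
    assume "\<not> 3 \<le> n"
    hence "n = 2" using assms(1) by simp
    thus False using assms(2)[of 0 1] assms(4) by (simp add: numeral_2_eq_2)
  qed
  obtain \<beta> \<sigma> where cov: "covering_family n d \<beta>" and \<sigma>: "\<sigma> \<in> rest_idx n d" "\<sigma> \<notin> \<beta> ` {..<d 0}"
    using exists_covering_family[OF _ assms(2) dpos card] n3 by auto
  have bR: "\<And>j. j < d 0 \<Longrightarrow> \<beta> j \<in> rest_idx n d" using cov unfolding covering_family_def by blast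
  have universal: "\<exists>C. \<forall>k<d 0. \<forall>x\<in>rest_idx n d.
      w k x = (\<Sum>j<d 0. C 0 k j * (\<Prod>i\<in>{1..<n}. C i (x i) (\<beta> j i)))"
    for w :: "nat \<Rightarrow> (nat \<Rightarrow> nat) \<Rightarrow> complex"
    by (rule canon_universal[where n=n and d=d and \<beta>=\<beta>, OF n bR canon_stoch_max_entangled[OF n cov sme]])
  have corners: "ix00 \<in> rest_idx n d" "ix11 \<in> rest_idx n d" "ix01 \<in> rest_idx n d"
    using corners_in_rest_idx[OF n3 _ _ dpos] assms(3) n3 by auto
  show False
  proof (cases "d 0 + 2 \<le> card (rest_idx n d)")
    case True
    show False
    proof (rule large_case[OF finite_rest_idx corners d0 True])
      fix w :: "nat \<Rightarrow> (nat \<Rightarrow> nat) \<Rightarrow> complex"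
      obtain C where "\<forall>k<d 0. \<forall>x\<in>rest_idx n d.
          w k x = (\<Sum>j<d 0. C 0 k j * (\<Prod>i\<in>{1..<n}. C i (x i) (\<beta> j i)))"
        using universal by blast
      moreover have "(\<Prod>i\<in>{1..<n}. C i (ix00 i) (\<beta> j i)) * (\<Prod>i\<in>{1..<n}. C i (ix11 i) (\<beta> j i))
          = (\<Prod>i\<in>{1..<n}. C i (ix10 i) (\<beta> j i)) * (\<Prod>i\<in>{1..<n}. C i (ix01 i) (\<beta> j i))" for j
        by (rule product_rectangle)
      ultimately show "\<exists>M q. (\<forall>j<d 0. q j ix00 * q j ix11 = q j ix10 * q j ix01) \<and>
          (\<forall>k<d 0. \<forall>x\<in>rest_idx n d. w k x = (\<Sum>j<d 0. M k j * q j x))"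
        by (intro exI[of _ "C 0"] exI[of _ "\<lambda>j x. \<Prod>i\<in>{1..<n}. C i (x i) (\<beta> j i)"]) simp
    qed
  next
    case False
    hence "card (rest_idx n d) = d 0 + 1" using card by simp
    thus False using tight_case[OF n d0 _ corners bR \<sigma> universal] by blast
  qed
qed

end
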